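(* Let $d\nu$ be a bounded non-negative measure on the unit circle $\mathbb{T}$ with covariance sequence $\mathbf{c}=(c_0,c_1,\dots)$, $c_k=\frac{1}{2\pi}\int_{-\pi}^{\pi}e^{-ik\theta}d\nu(\theta)$, and let $\delta$ be a weakly continuous metric on the set $\mathfrak{M}$ of bounded non-negative measures on $\mathbb{T}$. Then $\rho_\delta(\mathcal{F}_{\mathbf{c}_{0:n}})\to0$ as $n\to\infty$.
   Context: For $\mathbf{c}_{0:n}=(c_0,\dots,c_n)$, $\mathcal{F}_{\mathbf{c}_{0:n}}=\{d\mu\in\mathfrak{M}: \frac{1}{2\pi}\int_{-\pi}^{\pi}e^{-ik\theta}d\mu(\theta)=c_k,\ k=0,\dots,n\}$. The diameter of $\mathcal{F}\subset\mathfrak{M}$ is $\rho_\delta(\mathcal{F})=\sup\{\delta(d\mu_0,d\mu_1):d\mu_0,d\mu_1\in\mathcal{F}\}$. The weak topology on $\mathfrak{M}$: $d\mu_k\to d\mu$ iff $\int f d\mu_k\to\int f d\mu$ for all real continuous $f$ on $\mathbb{T}$; $\delta$ is weakly continuous if it is continuous on $\mathfrak{M}\times\mathfrak{M}$ for the weak topology. (A sequence $\mathbf{c}$ is called non-negative if all Toeplitz matrices $T_n=[c_{k-\ell}]_{k,\ell=0}^n$, with $c_{-k}=\bar c_k$, are positive semidefinite; these are exactly the covariance sequences of such measures.) *)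

theory Defs
  imports "HOL-Analysis.Analysis" "HOL-Library.Extended_Real"
begin

text \<open>The unit circle T, realised as the unit sphere in the complex plane with
  its Borel sigma-algebra; the point exp(i theta) corresponds to theta.\<close>
definition circle_space :: "complex measure" where
  "circle_space = restrict_space borel (sphere 0 1)"

definition Meas :: "complex measure set" where
  "Meas = {M. sets M = sets circle_space \<and> finite_measure M}"

text \<open>Covariance c_k = (1/2pi) int exp(-i k theta) dmu(theta); with z = exp(i theta),
  exp(-i k theta) = cnj z ^ k.\<close>
definition cov :: "complex measure \<Rightarrow> nat \<Rightarrow> complex" where
  "cov M k = (integral\<^sup>L M (\<lambda>z. cnj z ^ k)) / complex_of_real (2 * pi)"

definition Fam :: "(nat \<Rightarrow> complex) \<Rightarrow> nat \<Rightarrow> complex measure set" where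
  "Fam c n = {M \<in> Meas. \<forall>k\<le>n. cov M k = c k}"

definition weak_conv :: "(nat \<Rightarrow> complex measure) \<Rightarrow> complex measure \<Rightarrow> bool" where
  "weak_conv Ms M \<longleftrightarrow>
     (\<forall>f :: complex \<Rightarrow> real. continuous_on (sphere 0 1) f \<longrightarrow>
        (\<lambda>k. integral\<^sup>L (Ms k) f) \<longlonglongrightarrow> integral\<^sup>L M f)"

definition is_metric_on :: "'a set \<Rightarrow> ('a \<Rightarrow> 'a \<Rightarrow> real) \<Rightarrow> bool" where
  "is_metric_on S d \<longleftrightarrow>
     (\<forall>x\<in>S. \<forall>y\<in>S. 0 \<le> d x y \<and> (d x y = 0 \<longleftrightarrow> x = y) \<and> d x y = d y x) \<and>
     (\<forall>x\<in>S. \<forall>y\<in>S. \<forall>z\<in>S. d x z \<le> d x y + d y z)"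

definition weakly_continuous :: "(complex measure \<Rightarrow> complex measure \<Rightarrow> real) \<Rightarrow> bool" where
  "weakly_continuous d \<longleftrightarrow>
     (\<forall>Ms Ns M N. (\<forall>k. Ms k \<in> Meas \<and> Ns k \<in> Meas) \<and> M \<in> Meas \<and> N \<in> Meas \<and>
        weak_conv Ms M \<and> weak_conv Ns N \<longrightarrow>
        (\<lambda>k. d (Ms k) (Ns k)) \<longlonglongrightarrow> d M N)"

definition diam_delta :: "(complex measure \<Rightarrow> complex measure \<Rightarrow> real) \<Rightarrow> complex measure set \<Rightarrow> ereal" where
  "diam_delta d F = (SUP p \<in> F \<times> F. ereal (d (fst p) (snd p)))"

end

theory Submission
  imports Defs
begin

text \<open>Integrals against a continuous \<open>f\<close> are controlled by uniformly approximating \<open>f\<close>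
  (Stone--Weierstrass) with the real part of a polynomial in \<open>z\<close> and \<open>cnj z\<close>. Since
  \<open>z * cnj z = 1\<close> on the circle, the integral of such a polynomial of degree at most \<open>n\<close> is a
  combination of \<open>c\<^sub>0, \<dots>, c\<^sub>n\<close> and their conjugates; in particular every measure in \<open>Fam c n\<close>
  has mass \<open>2 pi c\<^sub>0\<close>. Hence any choice of \<open>M\<^sub>n \<in> Fam c n\<close> converges weakly to \<open>\<nu>\<close>. If the
  diameters did not tend to zero, there would be pairs in \<open>Fam c n\<close> at distance at least some
  \<open>b > 0\<close> for every \<open>n\<close>; by weak continuity of \<delta> their distances tend to \<open>\<delta> \<nu> \<nu> = 0\<close>.\<close>

type_synonym zpoly = "(complex \<times> nat \<times> nat) list"

definition zpoly_eval :: "zpoly \<Rightarrow> complex \<Rightarrow> complex" where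
  "zpoly_eval p z = (\<Sum>(c, j, k)\<leftarrow>p. c * z ^ j * cnj z ^ k)"

definition zpoly_mult :: "zpoly \<Rightarrow> zpoly \<Rightarrow> zpoly" where
  "zpoly_mult p q = concat (map (\<lambda>(c, j, k). map (\<lambda>(d, j', k'). (c * d, j + j', k + k')) q) p)"

definition zpoly_cnj :: "zpoly \<Rightarrow> zpoly" where
  "zpoly_cnj p = map (\<lambda>(c, j, k). (cnj c, k, j)) p"

lemma zpoly_eval_Nil [simp]: "zpoly_eval [] z = 0"
  by (simp add: zpoly_eval_def)

lemma zpoly_eval_Cons [simp]:
  "zpoly_eval ((c, j, k) # p) z = c * z ^ j * cnj z ^ k + zpoly_eval p z"
  by (simp add: zpoly_eval_def)

lemma zpoly_eval_append [simp]: "zpoly_eval (p @ q) z = zpoly_eval p z + zpoly_eval q z"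
  by (simp add: zpoly_eval_def)

lemma zpoly_eval_cnj [simp]: "zpoly_eval (zpoly_cnj p) z = cnj (zpoly_eval p z)"
  by (induction p) (auto simp: zpoly_cnj_def)

lemma zpoly_eval_mult [simp]: "zpoly_eval (zpoly_mult p q) z = zpoly_eval p z * zpoly_eval q z"
proof (induction p)
  case Nil
  then show ?case by (simp add: zpoly_mult_def)
next
  case (Cons m p)
  obtain c j k where m: "m = (c, j, k)" by (cases m) auto
  have "zpoly_eval (map (\<lambda>(d, j', k'). (c * d, j + j', k + k')) q) z
      = c * z ^ j * cnj z ^ k * zpoly_eval q z" for q
    by (induction q) (auto simp: algebra_simps power_add)
  with Cons show ?case by (simp add: zpoly_mult_def m algebra_simps)
qed

lemma continuous_on_zpoly_eval: "continuous_on A (zpoly_eval p)"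
proof (induction p)
  case Nil
  then show ?case by (simp add: zpoly_eval_def [abs_def])
next
  case (Cons m p)
  obtain c j k where m: "m = (c, j, k)" by (cases m) auto
  have "zpoly_eval (m # p) = (\<lambda>z. c * z ^ j * cnj z ^ k + zpoly_eval p z)"
    using m by auto
  then show ?case by (simp only:) (intro continuous_intros Cons)
qed

definition real_zpoly :: "(complex \<Rightarrow> real) \<Rightarrow> bool" where
  "real_zpoly g \<longleftrightarrow> (\<exists>p. g = (\<lambda>z. Re (zpoly_eval p z)))"

lemma real_zpoly_dense:
  assumes "compact S" "continuous_on S f" "0 < e"
  shows "\<exists>g. real_zpoly g \<and> (\<forall>x\<in>S. \<bar>f x - g x\<bar> < e)"
proof (rule Stone_Weierstrass_HOL[OF assms(1) _ _ _ _ _ assms(2,3)])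
  fix c :: real
  show "real_zpoly (\<lambda>x. c)"
    unfolding real_zpoly_def by (rule exI [of _ "[(of_real c, 0, 0)]"]) simp
next
  fix f :: "complex \<Rightarrow> real"
  assume "real_zpoly f"
  then show "continuous_on S f"
    by (auto simp: real_zpoly_def intro!: continuous_on_Re continuous_on_zpoly_eval)
next
  fix f g :: "complex \<Rightarrow> real"
  assume "real_zpoly f \<and> real_zpoly g"
  then obtain p q where f: "f = (\<lambda>z. Re (zpoly_eval p z))" and g: "g = (\<lambda>z. Re (zpoly_eval q z))"
    by (auto simp: real_zpoly_def)
  show "real_zpoly (\<lambda>x. f x + g x)"
    unfolding real_zpoly_def f g by (rule exI [of _ "p @ q"]) simp
  \<comment> \<open>\<open>Re u * Re v = Re (u * (v + cnj v) / 2)\<close>\<close>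
  have "f z * g z = Re (zpoly_eval (zpoly_mult [(1/2, 0, 0)] (zpoly_mult p (q @ zpoly_cnj q))) z)" for z
    unfolding f g by (simp add: field_simps)
  then show "real_zpoly (\<lambda>x. f x * g x)"
    unfolding real_zpoly_def by blast
next
  fix x y :: complex
  assume "x \<in> S \<and> y \<in> S \<and> x \<noteq> y"
  then have "Re x \<noteq> Re y \<or> Im x \<noteq> Im y"
    using complex_eqI by blast
  moreover have "real_zpoly Re"
    unfolding real_zpoly_def by (rule exI [of _ "[(1, 1, 0)]"]) simp
  moreover have "real_zpoly Im"
    unfolding real_zpoly_def by (rule exI [of _ "[(-\<i>, 1, 0)]"]) simp
  ultimately show "\<exists>f. real_zpoly f \<and> f x \<noteq> f y"
    by blast
qed

lemma monomial_on_circle: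
  assumes "norm z = 1"
  shows "z ^ j * cnj z ^ k = (if j \<le> k then cnj z ^ (k - j) else cnj (cnj z ^ (j - k)))"
proof -
  have "z * cnj z = 1"
    using assms complex_norm_square[of z] by simp
  show ?thesis
  proof (cases "j \<le> k")
    case True
    then have "z ^ j * cnj z ^ k = (z * cnj z) ^ j * cnj z ^ (k - j)"
      by (simp add: power_mult_distrib power_add [symmetric])
    with True \<open>z * cnj z = 1\<close> show ?thesis by simp
  next
    case False
    then have "z ^ j * cnj z ^ k = z ^ (j - k) * (z * cnj z) ^ k"
      by (simp add: power_mult_distrib power_add [symmetric])
    with False \<open>z * cnj z = 1\<close> show ?thesis by simp
  qed
qed


lemma space_Meas: "M \<in> Meas \<Longrightarrow> space M = sphere 0 1"
  unfolding Meas_def circle_space_def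
  by (auto dest!: sets_eq_imp_space_eq simp: space_restrict_space)

lemma finite_measure_Meas: "M \<in> Meas \<Longrightarrow> finite_measure M"
  unfolding Meas_def by auto

lemma borel_measurable_continuous_Meas:
  assumes "M \<in> Meas" "continuous_on (sphere 0 1) f"
  shows "f \<in> borel_measurable M"
proof -
  have "f \<in> borel_measurable circle_space"
    unfolding circle_space_def by (rule borel_measurable_continuous_on_restrict [OF assms(2)])
  moreover have "sets M = sets circle_space"
    using assms(1) by (simp add: Meas_def)
  ultimately show ?thesis
    using measurable_cong_sets by blast
qed

lemma integrable_continuous_Meas:
  fixes f :: "complex \<Rightarrow> 'b::{banach,second_countable_topology}"
  assumes "M \<in> Meas" "continuous_on (sphere 0 1) f"
  shows "integrable M f"
proof -
  interpret finite_measure M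
    using finite_measure_Meas [OF assms(1)] .
  obtain B where "\<forall>x\<in>sphere 0 1. norm (f x) \<le> B"
    using compact_continuous_image [OF assms(2) compact_sphere]
    by (metis compact_imp_bounded bounded_iff imageI)
  then show ?thesis
    using space_Meas [OF assms(1)] borel_measurable_continuous_Meas [OF assms]
    by (intro integrable_const_bound [where B = B]) auto
qed

lemma integral_monomial_Meas:
  assumes "M \<in> Meas"
  shows "integral\<^sup>L M (\<lambda>z. z ^ j * cnj z ^ k) =
    (if j \<le> k then 2 * pi * cov M (k - j) else cnj (2 * pi * cov M (j - k)))"
proof (cases "j \<le> k")
  case True
  have "integral\<^sup>L M (\<lambda>z. z ^ j * cnj z ^ k) = integral\<^sup>L M (\<lambda>z. cnj z ^ (k - j))"
    using space_Meas [OF assms] True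
    by (intro Bochner_Integration.integral_cong) (auto simp: monomial_on_circle)
  with True show ?thesis
    by (simp add: cov_def)
next
  case False
  have "integral\<^sup>L M (\<lambda>z. z ^ j * cnj z ^ k) = integral\<^sup>L M (\<lambda>z. cnj (cnj z ^ (j - k)))"
    using space_Meas [OF assms] False
    by (intro Bochner_Integration.integral_cong) (auto simp: monomial_on_circle)
  also have "\<dots> = cnj (integral\<^sup>L M (\<lambda>z. cnj z ^ (j - k)))"
    by (rule Bochner_Integration.integral_cnj)
  finally show ?thesis
    using False by (simp add: cov_def)
qed

lemma integral_zpoly_eq_if_cov_eq:
  assumes "M \<in> Meas" "N \<in> Meas" "\<forall>n\<le>D. cov M n = cov N n"
    and "\<forall>(c, j, k)\<in>set p. j + k \<le> D"
  shows "integral\<^sup>L M (zpoly_eval p) = integral\<^sup>L N (zpoly_eval p)"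
  using assms(4)
proof (induction p)
  case Nil
  then show ?case by (simp add: zpoly_eval_def [abs_def])
next
  case (Cons m p)
  obtain c j k where m: "m = (c, j, k)" by (cases m) auto
  have "integral\<^sup>L L (zpoly_eval (m # p))
      = c * integral\<^sup>L L (\<lambda>z. z ^ j * cnj z ^ k) + integral\<^sup>L L (zpoly_eval p)"
    if "L \<in> Meas" for L
  proof -
    have "zpoly_eval (m # p) = (\<lambda>z. c * (z ^ j * cnj z ^ k) + zpoly_eval p z)"
      using m by (auto simp: algebra_simps)
    then show ?thesis
      by (simp only:, subst Bochner_Integration.integral_add)
        (auto intro!: integrable_continuous_Meas [OF that] continuous_intros continuous_on_zpoly_eval)
  qed
  moreover have "integral\<^sup>L M (\<lambda>z. z ^ j * cnj z ^ k) = integral\<^sup>L N (\<lambda>z. z ^ j * cnj z ^ k)"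
    using assms(3) Cons.prems m by (auto simp: integral_monomial_Meas [OF assms(1)] integral_monomial_Meas [OF assms(2)])
  moreover have "integral\<^sup>L M (zpoly_eval p) = integral\<^sup>L N (zpoly_eval p)"
    using Cons by simp
  ultimately show ?case
    using assms(1,2) by simp
qed

lemma (in finite_measure) norm_integral_le_const_measure:
  fixes f :: "'a \<Rightarrow> 'b::{banach,second_countable_topology}"
  assumes "integrable M f" "\<forall>x\<in>space M. norm (f x) \<le> e"
  shows "norm (integral\<^sup>L M f) \<le> e * measure M (space M)"
proof -
  have "norm (integral\<^sup>L M f) \<le> integral\<^sup>L M (\<lambda>x. norm (f x))"
    by (rule integral_norm_bound)
  also have "\<dots> \<le> integral\<^sup>L M (\<lambda>x. e)"
    using assms by (intro integral_mono) auto
  finally show ?thesis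
    by (simp add: mult.commute)
qed

lemma integral_diff_le_uniform_approx:
  assumes "M \<in> Meas" "N \<in> Meas" "continuous_on (sphere 0 1) f" "continuous_on (sphere 0 1) g"
    and "\<forall>z\<in>sphere 0 1. \<bar>f z - g z\<bar> \<le> e"
  shows "\<bar>integral\<^sup>L M f - integral\<^sup>L N f\<bar>
    \<le> \<bar>integral\<^sup>L M g - integral\<^sup>L N g\<bar> + e * (measure M (space M) + measure N (space N))"
proof -
  have approx: "\<bar>integral\<^sup>L L f - integral\<^sup>L L g\<bar> \<le> e * measure L (space L)"
    if "L \<in> Meas" for L
  proof -
    interpret finite_measure L
      using finite_measure_Meas [OF that] .
    have "\<bar>integral\<^sup>L L (\<lambda>z. f z - g z)\<bar> \<le> e * measure L (space L)"
      using norm_integral_le_const_measure [of "\<lambda>z. f z - g z" e] assms(3-5) space_Meas [OF that]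
      by (auto intro!: integrable_continuous_Meas [OF that] continuous_intros)
    then show ?thesis
      using assms(3,4) by (simp add: integrable_continuous_Meas [OF that])
  qed
  from approx [OF assms(1)] approx [OF assms(2)] show ?thesis
    by (simp add: algebra_simps)
qed

lemma weak_conv_if_cov_eventually_eq:
  assumes \<nu>: "\<nu> \<in> Meas" and Ms: "\<forall>n. Ms n \<in> Meas"
    and cov_eq: "\<forall>k. \<forall>\<^sub>F n in sequentially. cov (Ms n) k = cov \<nu> k"
  shows "weak_conv Ms \<nu>"
  unfolding weak_conv_def
proof (intro allI impI tendstoI)
  fix f :: "complex \<Rightarrow> real" and r :: real
  assume f: "continuous_on (sphere 0 1) f" and "0 < r"
  define m where "m = measure \<nu> (space \<nu>)"
  define e where "e = r / (2 * m + 1)"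
  have "0 \<le> m"
    by (simp add: m_def)
  with \<open>0 < r\<close> have "0 < e" and "e * (m + m) < r"
    by (simp_all add: e_def field_simps)
  obtain g where "real_zpoly g" and approx: "\<forall>z\<in>sphere 0 1. \<bar>f z - g z\<bar> < e"
    using real_zpoly_dense [OF compact_sphere f \<open>0 < e\<close>] by blast
  then obtain p where g: "g = (\<lambda>z. Re (zpoly_eval p z))"
    by (auto simp: real_zpoly_def)
  have g_cont: "continuous_on (sphere 0 1) g"
    unfolding g by (intro continuous_on_Re continuous_on_zpoly_eval)
  obtain D where D: "\<forall>(c, j, k)\<in>set p. j + k \<le> D"
    using finite_nat_set_iff_bounded_le [of "(\<lambda>(c, j, k). j + k) ` set p"] by fastforce
  have "\<forall>\<^sub>F n in sequentially. \<forall>k\<in>{..D}. cov (Ms n) k = cov \<nu> k"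
    using cov_eq by (intro eventually_ball_finite) auto
  then show "\<forall>\<^sub>F n in sequentially. dist (integral\<^sup>L (Ms n) f) (integral\<^sup>L \<nu> f) < r"
  proof (rule eventually_mono)
    fix n
    assume "\<forall>k\<in>{..D}. cov (Ms n) k = cov \<nu> k"
    then have cov_le_D: "\<forall>k\<le>D. cov (Ms n) k = cov \<nu> k"
      by simp
    then have "measure (Ms n) (space (Ms n)) = m"
      by (auto simp: cov_def m_def dest: spec [of _ 0])
    moreover have "integral\<^sup>L (Ms n) g = integral\<^sup>L \<nu> g"
      using integral_zpoly_eq_if_cov_eq [OF Ms [rule_format] \<nu> cov_le_D D]
      by (simp add: g integrable_continuous_Meas Ms \<nu> continuous_on_zpoly_eval)
    moreover have "\<bar>integral\<^sup>L (Ms n) f - integral\<^sup>L \<nu> f\<bar>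
        \<le> \<bar>integral\<^sup>L (Ms n) g - integral\<^sup>L \<nu> g\<bar>
          + e * (measure (Ms n) (space (Ms n)) + measure \<nu> (space \<nu>))"
      using approx by (intro integral_diff_le_uniform_approx Ms [rule_format] \<nu> f g_cont) (auto simp: less_imp_le)
    ultimately show "dist (integral\<^sup>L (Ms n) f) (integral\<^sup>L \<nu> f) < r"
      using \<open>e * (m + m) < r\<close> by (simp add: dist_real_def m_def)
  qed
qed

lemma Fam_antimono: "n \<le> m \<Longrightarrow> Fam c m \<subseteq> Fam c n"
  by (auto simp: Fam_def)

lemma weak_conv_Fam:
  assumes "\<nu> \<in> Meas" "\<forall>n. Ms n \<in> Fam (cov \<nu>) n"
  shows "weak_conv Ms \<nu>"
proof (rule weak_conv_if_cov_eventually_eq [OF assms(1)])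
  show "\<forall>n. Ms n \<in> Meas"
    using assms(2) by (simp add: Fam_def)
  show "\<forall>k. \<forall>\<^sub>F n in sequentially. cov (Ms n) k = cov \<nu> k"
    using assms(2) by (auto simp: Fam_def intro: eventually_sequentiallyI)
qed

lemma dist_Fam_sequences_tendsto_0:
  assumes "\<nu> \<in> Meas" "is_metric_on Meas \<delta>" "weakly_continuous \<delta>"
    and "\<forall>n. Ms n \<in> Fam (cov \<nu>) n" "\<forall>n. Ns n \<in> Fam (cov \<nu>) n"
  shows "(\<lambda>n. \<delta> (Ms n) (Ns n)) \<longlonglongrightarrow> 0"
proof -
  have "(\<lambda>n. \<delta> (Ms n) (Ns n)) \<longlonglongrightarrow> \<delta> \<nu> \<nu>"
    using assms(3,4,5) weak_conv_Fam [OF assms(1,4)] weak_conv_Fam [OF assms(1,5)] assms(1)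
    unfolding weakly_continuous_def Fam_def by blast
  moreover have "\<delta> \<nu> \<nu> = 0"
    using assms(1,2) by (simp add: is_metric_on_def)
  ultimately show ?thesis
    by simp
qed

lemma diam_delta_mono: "F \<subseteq> G \<Longrightarrow> diam_delta d F \<le> diam_delta d G"
  unfolding diam_delta_def by (intro SUP_subset_mono) auto

lemma diam_delta_nonneg: "x \<in> F \<Longrightarrow> 0 \<le> d x x \<Longrightarrow> 0 \<le> diam_delta d F"
  unfolding diam_delta_def by (rule SUP_upper2 [of "(x, x)"]) auto

lemma less_diam_deltaE:
  assumes "ereal b < diam_delta d F"
  obtains x y where "x \<in> F" "y \<in> F" "b < d x y"
  using assms unfolding diam_delta_def less_SUP_iff by auto

theorem corollary2:
  fixes \<nu> :: "complex measure" and \<delta> :: "complex measure \<Rightarrow> complex measure \<Rightarrow> real"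
  assumes "\<nu> \<in> Meas"
    and "is_metric_on Meas \<delta>"
    and "weakly_continuous \<delta>"
  shows "(\<lambda>n. diam_delta \<delta> (Fam (cov \<nu>) n)) \<longlonglongrightarrow> 0"
proof -
  define D where "D n = diam_delta \<delta> (Fam (cov \<nu>) n)" for n
  have "decseq D"
    unfolding D_def by (intro decseq_SucI diam_delta_mono Fam_antimono) simp
  then have "D \<longlonglongrightarrow> (INF n. D n)"
    by (rule LIMSEQ_INF)
  moreover have "0 \<le> (INF n. D n)"
    using assms(1,2) unfolding D_def
    by (intro INF_greatest diam_delta_nonneg [of \<nu>]) (auto simp: Fam_def is_metric_on_def)
  moreover have "\<not> 0 < (INF n. D n)"
  proof
    assume "0 < (INF n. D n)"
    then obtain b where "0 < b" "ereal b < (INF n. D n)"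
      using ereal_dense2 by (metis ereal_less(2))
    then have "\<forall>n. \<exists>M N. M \<in> Fam (cov \<nu>) n \<and> N \<in> Fam (cov \<nu>) n \<and> b < \<delta> M N"
      unfolding D_def by (metis less_INF_D less_diam_deltaE UNIV_I)
    then obtain Ms Ns where pairs: "\<forall>n. Ms n \<in> Fam (cov \<nu>) n \<and> Ns n \<in> Fam (cov \<nu>) n \<and> b < \<delta> (Ms n) (Ns n)"
      by metis
    then have "(\<lambda>n. \<delta> (Ms n) (Ns n)) \<longlonglongrightarrow> 0"
      using assms by (intro dist_Fam_sequences_tendsto_0) auto
    then have "\<forall>\<^sub>F n in sequentially. \<delta> (Ms n) (Ns n) < b"
      using \<open>0 < b\<close> by (rule order_tendstoD)
    then obtain n where "\<delta> (Ms n) (Ns n) < b"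
      using eventually_happens' [OF sequentially_bot] by blast
    with pairs show False
      by (meson order.asym)
  qed
  ultimately show ?thesis
    unfolding D_def by (metis not_less order_antisym)
qed

end
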